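(* Let $\epsilon>0$, $\delta\ge0$, $\alpha\in(0,1)$, $n\ge 1$, $\theta_0\in(0,1)$, and let $X\sim\mathrm{Binom}(n,\theta)$ with $\theta$ unknown. Set $b=e^{-\epsilon}$, $q=\frac{2\delta b}{1-b+2\delta b}$, $N\sim\mathrm{Tulap}(0,b,q)$, and set $\phi^*_x=F_N(x-m_1)$ and $\psi^*_x=1-F_N(x-m_2)$, where $m_1,m_2\in\mathbb{R}$ are chosen such that $\mathbb{E}_{\theta_0}\phi^*_X=\alpha$ and $\mathbb{E}_{\theta_0}\psi^*_X=\alpha$. Then $\phi^*$ is the uniformly most powerful level-$\alpha$ test among $\mathscr D^n_{\epsilon,\delta}$ for testing $H_0:\theta\le\theta_0$ versus $H_1:\theta>\theta_0$, and $\psi^*$ is the uniformly most powerful level-$\alpha$ test among $\mathscr D^n_{\epsilon,\delta}$ for testing $H_0:\theta\ge\theta_0$ versus $H_1:\theta<\theta_0$.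
   Context: Nearest integer function: for $t\in\mathbb{R}$, $[t]$ is the integer nearest to $t$, where for $z\in\mathbb{Z}$, $[z+1/2]$ is defined to be the nearest even integer. Tulap distribution: for $m\in\mathbb{R}$, $b\in(0,1)$, $q\in[0,1)$, $N_0\sim\mathrm{Tulap}(m,b,0)$ has cdf $F_{N_0}(x)=\frac{b^{-[x-m]}}{1+b}\big(b+(x-m-[x-m]+\tfrac12)(1-b)\big)$ for $x\leq [m]$ and $F_{N_0}(x)=1-\frac{b^{[x-m]}}{1+b}\big(b+([x-m]-(x-m)+\tfrac12)(1-b)\big)$ for $x>[m]$; and $N\sim \mathrm{Tulap}(m,b,q)$ has cdf $F_N(x)=\frac{F_{N_0}(x)-q/2}{1-q}\,I\{q/2\leq F_{N_0}(x)\leq 1-q/2\}+I\{F_{N_0}(x)>1-q/2\}$. A (randomized) test is a function $\phi:\{0,1,\dots,n\}\to[0,1]$, $\phi_x$ being the probability of rejecting $H_0$ when $X=x$. $\mathscr D^n_{\epsilon,\delta}$ is the set of tests $\phi$ such that for all $x\in\{0,\dots,n-1\}$: $\phi_x\le e^\epsilon\phi_{x+1}+\delta$, $\phi_{x+1}\le e^\epsilon\phi_x+\delta$, $1-\phi_x\le e^\epsilon(1-\phi_{x+1})+\delta$, $1-\phi_{x+1}\le e^\epsilon(1-\phi_x)+\delta$. A test $\phi^*\in\Phi$ is uniformly most powerful at level $\alpha$ among $\Phi$ if $\sup_{\theta\in\Theta_0}\mathbb{E}_\theta\phi^*\le\alpha$ and for every $\phi\in\Phi$ with $\sup_{\theta\in\Theta_0}\mathbb{E}_\theta\phi\le\alpha$,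 $\mathbb{E}_\theta\phi^*\ge\mathbb{E}_\theta\phi$ for all $\theta$ in the alternative. *)

theory Defs
  imports Complex_Main
begin

definition nint :: "real \<Rightarrow> int" where
  "nint t = (if frac t = 1/2
             then (if even \<lfloor>t\<rfloor> then \<lfloor>t\<rfloor> else \<lfloor>t\<rfloor> + 1)
             else \<lfloor>t + 1/2\<rfloor>)"

definition tulap0_cdf :: "real \<Rightarrow> real \<Rightarrow> real \<Rightarrow> real" where
  "tulap0_cdf m b x =
    (if x \<le> of_int (nint m)
     then b powr (- of_int (nint (x - m))) / (1 + b)
            * (b + (x - m - of_int (nint (x - m)) + 1/2) * (1 - b))
     else 1 - b powr (of_int (nint (x - m))) / (1 + b)
            * (b + (of_int (nint (x - m)) - (x - m) + 1/2) * (1 - b)))"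

definition tulap_cdf :: "real \<Rightarrow> real \<Rightarrow> real \<Rightarrow> real \<Rightarrow> real" where
  "tulap_cdf m b q x =
    (let F0 = tulap0_cdf m b x in
      (F0 - q/2) / (1 - q) * (if q/2 \<le> F0 \<and> F0 \<le> 1 - q/2 then 1 else 0)
      + (if F0 > 1 - q/2 then 1 else 0))"

definition binom_exp :: "nat \<Rightarrow> real \<Rightarrow> (nat \<Rightarrow> real) \<Rightarrow> real" where
  "binom_exp n \<theta> \<phi> = (\<Sum>x = 0..n. real (n choose x) * \<theta> ^ x * (1 - \<theta>) ^ (n - x) * \<phi> x)"

definition dp_tests :: "nat \<Rightarrow> real \<Rightarrow> real \<Rightarrow> (nat \<Rightarrow> real) set" where
  "dp_tests n \<epsilon> \<delta> = {\<phi>. (\<forall>x\<le>n. 0 \<le> \<phi> x \<and> \<phi> x \<le> 1) \<and>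
     (\<forall>x<n. \<phi> x \<le> exp \<epsilon> * \<phi> (x+1) + \<delta> \<and>
            \<phi> (x+1) \<le> exp \<epsilon> * \<phi> x + \<delta> \<and>
            1 - \<phi> x \<le> exp \<epsilon> * (1 - \<phi> (x+1)) + \<delta> \<and>
            1 - \<phi> (x+1) \<le> exp \<epsilon> * (1 - \<phi> x) + \<delta>)}"

definition UMP :: "nat \<Rightarrow> (nat \<Rightarrow> real) set \<Rightarrow> real set \<Rightarrow> real set \<Rightarrow> real \<Rightarrow> (nat \<Rightarrow> real) \<Rightarrow> bool" where
  "UMP n \<Phi> \<Theta>0 \<Theta>1 \<alpha> \<phi>s \<longleftrightarrow>
     \<phi>s \<in> \<Phi> \<and> (\<forall>\<theta>\<in>\<Theta>0. binom_exp n \<theta> \<phi>s \<le> \<alpha>) \<and>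
     (\<forall>\<phi>\<in>\<Phi>. (\<forall>\<theta>\<in>\<Theta>0. binom_exp n \<theta> \<phi> \<le> \<alpha>) \<longrightarrow>
        (\<forall>\<theta>\<in>\<Theta>1. binom_exp n \<theta> \<phi>s \<ge> binom_exp n \<theta> \<phi>))"

end

theory Submission
  imports Defs
begin

(* A test in dp_tests can raise its rejection probability from x to x + 1 at most to
   min 1 (dp_next_bound eps delta (phi x)).  The Tulap tests attain this bound wherever they
   are positive: the cdf G of Tulap(0, b, 0) satisfies G (t + 1) = min (G t / b) (1 - b (1 - G t)),
   which is the pure-DP bound for b = exp (- eps), and q is chosen exactly so that the
   renormalisation (G - q/2) / (1 - q), clipped to [0, 1], turns it into the (eps, delta) bound.
   Hence a competing DP test that falls below phi* at some x stays below it from then on, and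
   the monotone likelihood ratio of the binomial family (Karlin's single-crossing argument)
   turns equal size at theta0 into larger power for every theta > theta0.  The test psi* is the
   mirror image under x |-> n - x of a test of the first kind, since Tulap(0, b, q) is symmetric. *)

section \<open>The binomial family\<close>

definition binom_mass :: "nat \<Rightarrow> real \<Rightarrow> nat \<Rightarrow> real" where
  "binom_mass n \<theta> x = real (n choose x) * \<theta> ^ x * (1 - \<theta>) ^ (n - x)"

lemma binom_exp_eq_sum_mass: "binom_exp n \<theta> \<phi> = (\<Sum>x = 0..n. binom_mass n \<theta> x * \<phi> x)"
  by (simp add: binom_exp_def binom_mass_def)

lemma sum_binom_mass: "(\<Sum>x = 0..n. binom_mass n \<theta> x) = 1"
  using binomial_ring[of \<theta> "1 - \<theta>" n] by (simp add: binom_mass_def atLeast0AtMost)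

lemma binom_mass_nonneg: "0 \<le> \<theta> \<Longrightarrow> \<theta> \<le> 1 \<Longrightarrow> 0 \<le> binom_mass n \<theta> x"
  by (simp add: binom_mass_def)

lemma binom_mass_pos: "0 < \<theta> \<Longrightarrow> \<theta> < 1 \<Longrightarrow> x \<le> n \<Longrightarrow> 0 < binom_mass n \<theta> x"
  by (simp add: binom_mass_def)

lemma binom_exp_diff: "binom_exp n \<theta> (\<lambda>x. f x - g x) = binom_exp n \<theta> f - binom_exp n \<theta> g"
  by (simp add: binom_exp_eq_sum_mass right_diff_distrib sum_subtractf)

lemma binom_exp_reflect:
  assumes "\<And>x. x \<le> n \<Longrightarrow> \<psi> x = \<phi> (n - x)"
  shows "binom_exp n \<theta> \<psi> = binom_exp n (1 - \<theta>) \<phi>"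
proof -
  have "binom_exp n \<theta> \<psi> =
      (\<Sum>x = 0..n. real (n choose x) * \<theta> ^ x * (1 - \<theta>) ^ (n - x) * \<phi> (n - x))"
    using assms by (simp add: binom_exp_def)
  also have "\<dots> = (\<Sum>y = 0..n. real (n choose (n - y)) * \<theta> ^ (n - y)
      * (1 - \<theta>) ^ (n - (n - y)) * \<phi> (n - (n - y)))"
    by (subst sum.atLeastAtMost_rev) simp
  also have "\<dots> = binom_exp n (1 - \<theta>) \<phi>"
    unfolding binom_exp_def by (intro sum.cong refl) (auto simp: binomial_symmetric[symmetric])
  finally show ?thesis .
qed

lemma binom_mass_likelihood_ratio_mono:
  assumes "0 \<le> \<theta>" "\<theta> \<le> \<theta>'" "\<theta>' \<le> 1" "y \<le> x" "x \<le> n"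
  shows "binom_mass n \<theta>' y * binom_mass n \<theta> x \<le> binom_mass n \<theta>' x * binom_mass n \<theta> y"
proof -
  obtain d where x: "x = y + d" using \<open>y \<le> x\<close> le_Suc_ex by blast
  have nd: "n - y = (n - x) + d" using assms x by simp
  define c where "c = real (n choose x) * real (n choose y)
      * \<theta>' ^ y * \<theta> ^ y * (1 - \<theta>') ^ (n - x) * (1 - \<theta>) ^ (n - x)"
  have "0 \<le> c" unfolding c_def using assms by simp
  have "(1 - \<theta>') * \<theta> \<le> \<theta>' * (1 - \<theta>)"
    using assms by (simp add: algebra_simps)
  then have "((1 - \<theta>') * \<theta>) ^ d \<le> (\<theta>' * (1 - \<theta>)) ^ d"
    using assms by (intro power_mono) auto
  then have "c * ((1 - \<theta>') ^ d * \<theta> ^ d) \<le> c * (\<theta>' ^ d * (1 - \<theta>) ^ d)"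
    using \<open>0 \<le> c\<close> by (intro mult_left_mono) (auto simp: power_mult_distrib)
  then show ?thesis
    unfolding binom_mass_def c_def nd x by (simp add: power_add algebra_simps)
qed

lemma binom_exp_mono_param:
  assumes mono: "mono_on {..n} \<phi>" and "0 \<le> \<theta>" "\<theta> \<le> \<theta>'" "\<theta>' \<le> 1"
  shows "binom_exp n \<theta> \<phi> \<le> binom_exp n \<theta>' \<phi>"
proof -
  let ?w = "binom_mass n \<theta>" and ?w' = "binom_mass n \<theta>'"
  have "0 \<le> (\<Sum>x=0..n. \<Sum>y=0..n. (\<phi> x - \<phi> y) * (?w' x * ?w y - ?w' y * ?w x))"
  proof (intro sum_nonneg)
    fix x y assume "x \<in> {0..n}" "y \<in> {0..n}"
    then show "0 \<le> (\<phi> x - \<phi> y) * (?w' x * ?w y - ?w' y * ?w x)"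
      using binom_mass_likelihood_ratio_mono[OF assms(2-4), of y x n]
        binom_mass_likelihood_ratio_mono[OF assms(2-4), of x y n]
        mono_onD[OF mono, of x y] mono_onD[OF mono, of y x]
      by (cases "y \<le> x") (auto intro: mult_nonneg_nonneg mult_nonpos_nonpos)
  qed
  also have "\<dots> = 2 * (binom_exp n \<theta>' \<phi> - binom_exp n \<theta> \<phi>)"
    by (simp add: algebra_simps sum_subtractf sum.distrib sum_distrib_left[symmetric]
        sum_distrib_right[symmetric] sum_binom_mass binom_exp_eq_sum_mass sum.swap[of _ "{0..n}"])
  finally show ?thesis by simp
qed

section \<open>Differentially private tests\<close>

definition dp_next_bound :: "real \<Rightarrow> real \<Rightarrow> real \<Rightarrow> real" where
  "dp_next_bound \<epsilon> \<delta> p = min (exp \<epsilon> * p + \<delta>) (1 - exp (- \<epsilon>) * (1 - p - \<delta>))"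

lemma mono_dp_next_bound: "mono (dp_next_bound \<epsilon> \<delta>)"
proof (rule monoI)
  fix p p' :: real assume "p \<le> p'"
  then have "exp \<epsilon> * p \<le> exp \<epsilon> * p'" "exp (- \<epsilon>) * (1 - p' - \<delta>) \<le> exp (- \<epsilon>) * (1 - p - \<delta>)"
    by (simp_all add: mult_left_mono)
  then show "dp_next_bound \<epsilon> \<delta> p \<le> dp_next_bound \<epsilon> \<delta> p'"
    unfolding dp_next_bound_def by (intro min.mono) auto
qed

lemma dp_next_bound_zero_nonneg:
  assumes "0 \<le> \<epsilon>" "0 \<le> \<delta>" shows "0 \<le> dp_next_bound \<epsilon> \<delta> 0"
proof -
  have "exp (- \<epsilon>) * (1 - \<delta>) \<le> 1"
  proof (cases "\<delta> \<le> 1")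
    case True
    then show ?thesis using assms by (intro mult_le_one) auto
  next
    case False
    then have "exp (- \<epsilon>) * (1 - \<delta>) \<le> 0" by (intro mult_nonneg_nonpos) auto
    then show ?thesis by simp
  qed
  then show ?thesis using assms by (simp add: dp_next_bound_def)
qed

lemma dp_next_bound_one_ge: "0 \<le> \<epsilon> \<Longrightarrow> 0 \<le> \<delta> \<Longrightarrow> 1 \<le> dp_next_bound \<epsilon> \<delta> 1"
  by (simp add: dp_next_bound_def add_increasing2)

lemma compl_dp_ineq_iff:
  fixes p p' \<epsilon> \<delta> :: real
  shows "1 - p \<le> exp \<epsilon> * (1 - p') + \<delta> \<longleftrightarrow> p' \<le> 1 - exp (- \<epsilon>) * (1 - p - \<delta>)"
proof -
  have "1 - p \<le> exp \<epsilon> * (1 - p') + \<delta> \<longleftrightarrow>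
      exp (- \<epsilon>) * (1 - p - \<delta>) \<le> exp (- \<epsilon>) * (exp \<epsilon> * (1 - p'))"
    using mult_le_cancel_left_pos[of "exp (- \<epsilon>)" "1 - p - \<delta>" "exp \<epsilon> * (1 - p')"] by auto
  also have "exp (- \<epsilon>) * (exp \<epsilon> * (1 - p')) = 1 - p'"
    by (simp add: exp_minus field_simps)
  finally show ?thesis by linarith
qed

lemma dp_tests_succ_le:
  assumes "\<phi> \<in> dp_tests n \<epsilon> \<delta>" "x < n"
  shows "\<phi> (x + 1) \<le> min 1 (dp_next_bound \<epsilon> \<delta> (\<phi> x))"
  using assms compl_dp_ineq_iff[of "\<phi> x" \<epsilon> "\<phi> (x + 1)" \<delta>]
  by (auto simp: dp_tests_def dp_next_bound_def)

lemma mono_in_dp_testsI: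
  assumes "0 \<le> \<epsilon>" "0 \<le> \<delta>" and mono: "mono_on {..n} \<phi>"
    and bounds: "\<And>x. x \<le> n \<Longrightarrow> 0 \<le> \<phi> x \<and> \<phi> x \<le> 1"
    and succ: "\<And>x. x < n \<Longrightarrow> \<phi> (x + 1) \<le> dp_next_bound \<epsilon> \<delta> (\<phi> x)"
  shows "\<phi> \<in> dp_tests n \<epsilon> \<delta>"
  unfolding dp_tests_def
proof (intro CollectI conjI allI impI)
  fix x assume "x < n"
  then have le: "\<phi> x \<le> \<phi> (x + 1)" "0 \<le> \<phi> x" "\<phi> (x + 1) \<le> 1"
    using mono_onD[OF mono, of x "x + 1"] bounds[of x] bounds[of "x + 1"] by auto
  have "1 * \<phi> (x + 1) \<le> exp \<epsilon> * \<phi> (x + 1)" "1 * (1 - \<phi> x) \<le> exp \<epsilon> * (1 - \<phi> x)"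
    using le \<open>0 \<le> \<epsilon>\<close> bounds[of x] \<open>x < n\<close> by (intro mult_right_mono; simp)+
  with le succ[OF \<open>x < n\<close>] \<open>0 \<le> \<delta>\<close> compl_dp_ineq_iff[of "\<phi> x" \<epsilon> "\<phi> (x + 1)" \<delta>]
  show "\<phi> x \<le> exp \<epsilon> * \<phi> (x + 1) + \<delta>" "\<phi> (x + 1) \<le> exp \<epsilon> * \<phi> x + \<delta>"
    "1 - \<phi> x \<le> exp \<epsilon> * (1 - \<phi> (x + 1)) + \<delta>" "1 - \<phi> (x + 1) \<le> exp \<epsilon> * (1 - \<phi> x) + \<delta>"
    by (auto simp: dp_next_bound_def)
qed (use bounds in auto)

lemma dp_tests_reflect:
  assumes \<phi>: "\<phi> \<in> dp_tests n \<epsilon> \<delta>" and \<psi>: "\<And>x. x \<le> n \<Longrightarrow> \<psi> x = \<phi> (n - x)"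
  shows "\<psi> \<in> dp_tests n \<epsilon> \<delta>"
  unfolding dp_tests_def
proof (intro CollectI conjI allI impI)
  fix x assume "x < n"
  define z where "z = n - (x + 1)"
  have "z < n" "\<psi> x = \<phi> (z + 1)" "\<psi> (x + 1) = \<phi> z"
    using \<open>x < n\<close> \<psi> by (auto simp: z_def Suc_diff_Suc)
  with \<phi> show "\<psi> x \<le> exp \<epsilon> * \<psi> (x + 1) + \<delta>" "\<psi> (x + 1) \<le> exp \<epsilon> * \<psi> x + \<delta>"
    "1 - \<psi> x \<le> exp \<epsilon> * (1 - \<psi> (x + 1)) + \<delta>" "1 - \<psi> (x + 1) \<le> exp \<epsilon> * (1 - \<psi> x) + \<delta>"
    unfolding dp_tests_def by auto
qed (use assms in \<open>auto simp: dp_tests_def\<close>)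

definition dp_extremal :: "nat \<Rightarrow> real \<Rightarrow> real \<Rightarrow> (nat \<Rightarrow> real) \<Rightarrow> bool" where
  "dp_extremal n \<epsilon> \<delta> \<phi> \<longleftrightarrow>
    (\<forall>x<n. 0 < \<phi> x \<longrightarrow> min 1 (dp_next_bound \<epsilon> \<delta> (\<phi> x)) \<le> \<phi> (x + 1))"

lemma binom_exp_sign_change:
  assumes "0 < \<theta>" "\<theta> < 1" "\<theta> \<le> \<theta>'" "\<theta>' \<le> 1" "k \<le> n"
    and neg: "\<And>x. x < k \<Longrightarrow> d x \<le> 0" and pos: "\<And>x. k \<le> x \<Longrightarrow> x \<le> n \<Longrightarrow> 0 \<le> d x"
    and "0 \<le> binom_exp n \<theta> d"
  shows "0 \<le> binom_exp n \<theta>' d"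
proof -
  let ?w = "binom_mass n \<theta>" and ?w' = "binom_mass n \<theta>'"
  have term_le: "?w' k * (?w x * d x) \<le> ?w k * (?w' x * d x)" if "x \<le> n" for x
  proof (cases "k \<le> x")
    case True
    then have "(?w' k * ?w x) * d x \<le> (?w' x * ?w k) * d x"
      using binom_mass_likelihood_ratio_mono[of \<theta> \<theta>' k x n] assms pos[of x] \<open>x \<le> n\<close>
      by (intro mult_right_mono) auto
    then show ?thesis by (simp add: ac_simps)
  next
    case False
    then have "(?w' k * ?w x) * d x \<le> (?w' x * ?w k) * d x"
      using binom_mass_likelihood_ratio_mono[of \<theta> \<theta>' x k n] assms neg[of x]
      by (intro mult_right_mono_neg) auto
    then show ?thesis by (simp add: ac_simps)
  qed
  have "0 \<le> ?w' k * binom_exp n \<theta> d"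
    using assms binom_mass_nonneg[of \<theta>' n k] by simp
  also have "\<dots> \<le> ?w k * binom_exp n \<theta>' d"
    unfolding binom_exp_eq_sum_mass sum_distrib_left by (intro sum_mono term_le) simp
  finally show ?thesis
    using binom_mass_pos[OF \<open>0 < \<theta>\<close> \<open>\<theta> < 1\<close> \<open>k \<le> n\<close>] by (simp add: zero_le_mult_iff)
qed

lemma dp_extremal_stays_above:
  assumes mono: "mono_on {..n} \<phi>s" and ext: "dp_extremal n \<epsilon> \<delta> \<phi>s"
    and \<phi>: "\<phi> \<in> dp_tests n \<epsilon> \<delta>" and "\<phi> k < \<phi>s k" "k \<le> x" "x \<le> n"
  shows "\<phi> x \<le> \<phi>s x"
  using \<open>k \<le> x\<close> \<open>x \<le> n\<close>
proof (induction x rule: dec_induct)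
  case base
  then show ?case using \<open>\<phi> k < \<phi>s k\<close> by simp
next
  case (step x)
  have "0 \<le> \<phi> k" using \<phi> step by (simp add: dp_tests_def)
  moreover have "\<phi>s k \<le> \<phi>s x" using mono step by (auto intro: mono_onD)
  ultimately have "0 < \<phi>s x" using \<open>\<phi> k < \<phi>s k\<close> by linarith
  have "\<phi> (x + 1) \<le> min 1 (dp_next_bound \<epsilon> \<delta> (\<phi> x))"
    using dp_tests_succ_le[OF \<phi>] step by simp
  also have "\<dots> \<le> min 1 (dp_next_bound \<epsilon> \<delta> (\<phi>s x))"
    using step by (intro min.mono order.refl monoD[OF mono_dp_next_bound]) simp
  also have "\<dots> \<le> \<phi>s (x + 1)"
    using ext \<open>0 < \<phi>s x\<close> step by (simp add: dp_extremal_def)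
  finally show ?case by simp
qed

lemma dp_extremal_crossing:
  assumes mono: "mono_on {..n} \<phi>s" and ext: "dp_extremal n \<epsilon> \<delta> \<phi>s"
    and \<phi>: "\<phi> \<in> dp_tests n \<epsilon> \<delta>" and "0 < \<theta>" "\<theta> < 1"
    and size: "binom_exp n \<theta> \<phi> \<le> binom_exp n \<theta> \<phi>s"
  obtains k where "k \<le> n" "\<And>x. x < k \<Longrightarrow> \<phi>s x \<le> \<phi> x"
    "\<And>x. k \<le> x \<Longrightarrow> x \<le> n \<Longrightarrow> \<phi> x \<le> \<phi>s x"
proof (cases "\<exists>x\<le>n. \<phi> x < \<phi>s x")
  case True
  define k where "k = (LEAST x. x \<le> n \<and> \<phi> x < \<phi>s x)"
  have k: "k \<le> n" "\<phi> k < \<phi>s k"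
    using LeastI_ex[OF True[unfolded Bex_def]] unfolding k_def by auto
  have below: "\<phi>s x \<le> \<phi> x" if "x < k" for x
    using not_less_Least[of x "\<lambda>x. x \<le> n \<and> \<phi> x < \<phi>s x"] that k by (auto simp: k_def)
  have above: "\<phi> x \<le> \<phi>s x" if "k \<le> x" "x \<le> n" for x
    using dp_extremal_stays_above[OF mono ext \<phi> k(2) that] .
  show ?thesis using that k below above by blast
next
  case False
  \<comment> \<open>\<open>\<phi>s \<le> \<phi>\<close> everywhere, and equal size at \<open>\<theta>\<close> forces \<open>\<phi> n = \<phi>s n\<close>, so \<open>k = n\<close> works\<close>
  have terms: "0 \<le> binom_mass n \<theta> x * (\<phi> x - \<phi>s x)" if "x \<le> n" for x
    using False that binom_mass_pos[OF \<open>0 < \<theta>\<close> \<open>\<theta> < 1\<close>, of x n]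
    by (auto intro!: mult_nonneg_nonneg simp: not_less)
  have "binom_exp n \<theta> (\<lambda>x. \<phi> x - \<phi>s x) = 0"
  proof (rule antisym)
    show "0 \<le> binom_exp n \<theta> (\<lambda>x. \<phi> x - \<phi>s x)"
      unfolding binom_exp_eq_sum_mass using terms by (intro sum_nonneg) auto
  qed (use size in \<open>simp add: binom_exp_diff\<close>)
  then have "binom_mass n \<theta> n * (\<phi> n - \<phi>s n) = 0"
    unfolding binom_exp_eq_sum_mass using terms by (subst (asm) sum_nonneg_eq_0_iff) auto
  then have "\<phi> n = \<phi>s n"
    using binom_mass_pos[OF \<open>0 < \<theta>\<close> \<open>\<theta> < 1\<close>, of n n] by simp
  with False show ?thesis
    by (intro that[of n]) (auto simp: not_less dest: le_antisym)
qed

theorem dp_extremal_UMP: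
  assumes "0 < \<theta>0" "\<theta>0 < 1" and mono: "mono_on {..n} \<phi>s"
    and dp: "\<phi>s \<in> dp_tests n \<epsilon> \<delta>" and ext: "dp_extremal n \<epsilon> \<delta> \<phi>s"
    and size: "binom_exp n \<theta>0 \<phi>s = \<alpha>"
  shows "UMP n (dp_tests n \<epsilon> \<delta>) {0..\<theta>0} {\<theta>0<..1} \<alpha> \<phi>s"
  unfolding UMP_def
proof (intro conjI ballI impI)
  fix \<theta> assume "\<theta> \<in> {0..\<theta>0}"
  then show "binom_exp n \<theta> \<phi>s \<le> \<alpha>"
    using binom_exp_mono_param[OF mono, of \<theta> \<theta>0] assms by auto
next
  fix \<phi> \<theta> assume \<phi>: "\<phi> \<in> dp_tests n \<epsilon> \<delta>" and "\<forall>\<theta>\<in>{0..\<theta>0}. binom_exp n \<theta> \<phi> \<le> \<alpha>"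
    and "\<theta> \<in> {\<theta>0<..1}"
  then have le: "binom_exp n \<theta>0 \<phi> \<le> binom_exp n \<theta>0 \<phi>s" using assms by auto
  obtain k where "k \<le> n" "\<And>x. x < k \<Longrightarrow> \<phi>s x \<le> \<phi> x"
    "\<And>x. k \<le> x \<Longrightarrow> x \<le> n \<Longrightarrow> \<phi> x \<le> \<phi>s x"
    using dp_extremal_crossing[OF mono ext \<phi> \<open>0 < \<theta>0\<close> \<open>\<theta>0 < 1\<close> le] by blast
  then have "0 \<le> binom_exp n \<theta> (\<lambda>x. \<phi>s x - \<phi> x)"
    using \<open>\<theta> \<in> {\<theta>0<..1}\<close> le assms
    by (intro binom_exp_sign_change[of \<theta>0 \<theta> k n]) (auto simp: binom_exp_diff)
  then show "binom_exp n \<theta> \<phi> \<le> binom_exp n \<theta> \<phi>s" by (simp add: binom_exp_diff)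
qed (fact dp)

section \<open>The Tulap cdf\<close>

lemma floor_half_dist: "\<bar>t - of_int \<lfloor>t + 1/2\<rfloor>\<bar> \<le> 1/2"
  unfolding abs_le_iff by linarith

lemma nint_dist: "\<bar>t - of_int (nint t)\<bar> \<le> 1/2"
proof (cases "frac t = 1/2")
  case True
  then have "t = of_int \<lfloor>t\<rfloor> + 1/2" by (simp add: frac_def)
  then show ?thesis unfolding nint_def using True by (auto simp: abs_if)
next
  case False
  then show ?thesis unfolding nint_def using floor_half_dist[of t] by simp
qed

lemma nint_0: "nint 0 = 0"
  by (simp add: nint_def)

definition tulap_piece :: "real \<Rightarrow> int \<Rightarrow> real \<Rightarrow> real" where
  "tulap_piece b k s =
    (if k \<le> 0 then b powr (- of_int k) / (1 + b) * (b + (s - of_int k + 1/2) * (1 - b))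
     else 1 - b powr (of_int k) / (1 + b) * (b + (of_int k - s + 1/2) * (1 - b)))"

lemma tulap_piece_continuous:
  assumes "0 < b" shows "tulap_piece b (k + 1) (of_int k + 1/2) = tulap_piece b k (of_int k + 1/2)"
proof -
  have "b powr (- of_int k) = b powr (- of_int (k + 1)) * b" "b powr (of_int (k + 1)) = b powr (of_int k) * b"
    using powr_add[of b "- of_int (k + 1)" 1] powr_add[of b "of_int k" 1] assms by simp_all
  then show ?thesis using assms
    by (cases "k \<le> -1"; cases "k = 0") (auto simp: tulap_piece_def field_simps)
qed

lemma tulap0_cdf_eq_piece:
  assumes "0 < b" "\<bar>s - of_int k\<bar> \<le> 1/2"
  shows "tulap0_cdf 0 b s = tulap_piece b k s"
proof -
  have nint: "tulap0_cdf 0 b s = tulap_piece b (nint s) s"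
  proof (cases "s \<le> 0")
    case True
    then have "nint s \<le> 0" using nint_dist[of s] by linarith
    with True show ?thesis by (simp add: tulap0_cdf_def tulap_piece_def nint_0)
  next
    case False
    then have "0 \<le> nint s" using nint_dist[of s] by linarith
    with False \<open>0 < b\<close> show ?thesis
      by (cases "nint s = 0") (auto simp: tulap0_cdf_def tulap_piece_def nint_0 field_simps)
  qed
  have "\<bar>of_int k - of_int (nint s)\<bar> \<le> (1::real)" using nint_dist[of s] assms(2) by linarith
  then consider "k = nint s" | "k = nint s + 1" | "nint s = k + 1" by linarith
  then show ?thesis
  proof cases
    case 1
    then show ?thesis using nint by simp
  next
    case 2
    then have "s = of_int (nint s) + 1/2" using nint_dist[of s] assms(2) by (auto simp: abs_le_iff)
    then show ?thesis using nint 2 tulap_piece_continuous[OF \<open>0 < b\<close>, of "nint s"] by simp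
  next
    case 3
    then have "s = of_int k + 1/2" using nint_dist[of s] assms(2) by (auto simp: abs_le_iff)
    then show ?thesis using nint 3 tulap_piece_continuous[OF \<open>0 < b\<close>, of k] by simp
  qed
qed

lemma tulap_piece_mono:
  assumes "0 < b" "b < 1" "s \<le> t"
  shows "tulap_piece b k s \<le> tulap_piece b k t"
proof -
  have "(s - of_int k + 1/2) * (1 - b) \<le> (t - of_int k + 1/2) * (1 - b)"
    "(of_int k - t + 1/2) * (1 - b) \<le> (of_int k - s + 1/2) * (1 - b)"
    using assms by (auto intro!: mult_right_mono)
  then show ?thesis
    unfolding tulap_piece_def using assms by (auto intro!: mult_left_mono divide_right_mono)
qed

lemma tulap_piece_uminus:
  assumes "0 < b" shows "tulap_piece b (- k) (- s) = 1 - tulap_piece b k s"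
proof (cases "k = 0")
  case True
  then show ?thesis using assms by (simp add: tulap_piece_def field_simps)
qed (auto simp: tulap_piece_def algebra_simps)

lemma tulap_piece_succ_neg:
  assumes "0 < b" "k \<le> -1"
  shows "tulap_piece b (k + 1) (t + 1) = tulap_piece b k t / b"
proof -
  define W where "W = b powr (- of_int (k + 1))"
  define c where "c = b + (t - of_int k + 1/2) * (1 - b)"
  have "b powr (- of_int k) = W * b"
    using powr_add[of b "- of_int (k + 1)" 1] assms by (simp add: W_def)
  then have "tulap_piece b k t = W * b / (1 + b) * c"
    using assms by (simp add: tulap_piece_def c_def)
  moreover have "tulap_piece b (k + 1) (t + 1) = W / (1 + b) * c"
    using assms by (simp add: tulap_piece_def W_def c_def)
  ultimately show ?thesis using assms by simp
qed

lemma tulap_piece_succ_nonneg: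
  assumes "0 < b" "0 \<le> k"
  shows "1 - tulap_piece b (k + 1) (t + 1) = b * (1 - tulap_piece b k t)"
proof -
  have "b powr (of_int (k + 1)) = b powr (of_int k) * b"
    using powr_add[of b "of_int k" 1] assms by simp
  then show ?thesis using assms by (cases "k = 0") (auto simp: tulap_piece_def field_simps)
qed

lemma convex_comb_in_unit:
  fixes b u :: real
  assumes "0 < b" "b < 1" "0 \<le> u" "u \<le> 1"
  shows "0 \<le> b + u * (1 - b)" "b + u * (1 - b) \<le> 1"
proof -
  have "0 \<le> u * (1 - b)" "u * (1 - b) \<le> 1 - b"
    using assms mult_right_mono[of u 1 "1 - b"] by auto
  then show "0 \<le> b + u * (1 - b)" "b + u * (1 - b) \<le> 1" using assms by linarith+
qed

lemma tulap_piece_le: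
  assumes "0 < b" "b < 1" "k \<le> -1" "\<bar>t - of_int k\<bar> \<le> 1/2"
  shows "tulap_piece b k t \<le> b / (1 + b)"
proof -
  let ?u = "t - of_int k + 1/2"
  have "0 \<le> ?u" "?u \<le> 1" using assms(4) unfolding abs_le_iff by linarith+
  note c = convex_comb_in_unit[OF assms(1,2) this]
  have pw: "b powr (- of_int k) \<le> b powr 1" using assms by (intro powr_mono') auto
  have "b powr (- of_int k) * (b + ?u * (1 - b)) \<le> b * 1"
    using assms by (intro mult_mono[OF _ c(2) _ c(1)]) (use pw in auto)
  then show ?thesis using assms by (simp add: tulap_piece_def divide_right_mono)
qed

lemma tulap_piece_ge:
  assumes "0 < b" "b < 1" "0 \<le> k" "\<bar>t - of_int k\<bar> \<le> 1/2"
  shows "b / (1 + b) \<le> tulap_piece b k t"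
proof (cases "k = 0")
  case True
  then show ?thesis using assms by (simp add: tulap_piece_def abs_le_iff divide_right_mono)
next
  case False
  let ?u = "of_int k - t + 1/2"
  have "0 \<le> ?u" "?u \<le> 1" using assms(4) unfolding abs_le_iff by linarith+
  note c = convex_comb_in_unit[OF assms(1,2) this]
  have pw: "b powr (of_int k) \<le> b powr 1" using assms False by (intro powr_mono') auto
  have "b powr (of_int k) * (b + ?u * (1 - b)) \<le> b * 1"
    using assms by (intro mult_mono[OF _ c(2) _ c(1)]) (use pw in auto)
  then have "b powr (of_int k) / (1 + b) * (b + ?u * (1 - b)) \<le> b / (1 + b)"
    using assms by (simp add: divide_right_mono)
  moreover have "b / (1 + b) \<le> 1 - b / (1 + b)" using assms by (auto simp: field_simps intro: mult_le_one)
  moreover have "tulap_piece b k t = 1 - b powr (of_int k) / (1 + b) * (b + ?u * (1 - b))"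
    using assms False by (simp add: tulap_piece_def)
  ultimately show ?thesis by linarith
qed

lemma min_pure_dp_bound_cases:
  fixes b g :: real
  assumes "0 < b" "b < 1"
  shows "g \<le> b / (1 + b) \<Longrightarrow> min (g / b) (1 - b * (1 - g)) = g / b"
    and "b / (1 + b) \<le> g \<Longrightarrow> min (g / b) (1 - b * (1 - g)) = 1 - b * (1 - g)"
proof -
  define c where "c = (1 - b) / b"
  have "0 < c" using assms by (simp add: c_def)
  have diff: "g / b - (1 - b * (1 - g)) = c * ((1 + b) * g - b)"
    using assms by (simp add: c_def field_simps)
  have eq: "g \<le> b / (1 + b) \<longleftrightarrow> (1 + b) * g \<le> b" "b / (1 + b) \<le> g \<longleftrightarrow> b \<le> (1 + b) * g"
    using assms by (simp_all add: pos_le_divide_eq pos_divide_le_eq mult.commute)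
  show "min (g / b) (1 - b * (1 - g)) = g / b" if "g \<le> b / (1 + b)"
  proof (rule min_absorb1)
    have "c * ((1 + b) * g - b) \<le> 0"
      using that eq \<open>0 < c\<close> by (intro mult_nonneg_nonpos) auto
    then show "g / b \<le> 1 - b * (1 - g)" using diff by linarith
  qed
  show "min (g / b) (1 - b * (1 - g)) = 1 - b * (1 - g)" if "b / (1 + b) \<le> g"
  proof (rule min_absorb2)
    have "0 \<le> c * ((1 + b) * g - b)"
      using that eq \<open>0 < c\<close> by (intro mult_nonneg_nonneg) auto
    then show "1 - b * (1 - g) \<le> g / b" using diff by linarith
  qed
qed

lemma tulap0_cdf_succ:
  assumes "0 < b" "b < 1"
  shows "tulap0_cdf 0 b (t + 1) = min (tulap0_cdf 0 b t / b) (1 - b * (1 - tulap0_cdf 0 b t))"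
proof -
  define k where "k = \<lfloor>t + 1/2\<rfloor>"
  have t: "\<bar>t - of_int k\<bar> \<le> 1/2" unfolding k_def by (rule floor_half_dist)
  then have "\<bar>(t + 1) - of_int (k + 1)\<bar> \<le> 1/2" by simp
  then have G: "tulap0_cdf 0 b t = tulap_piece b k t"
      "tulap0_cdf 0 b (t + 1) = tulap_piece b (k + 1) (t + 1)"
    using tulap0_cdf_eq_piece[OF \<open>0 < b\<close>] t by auto
  show ?thesis
  proof (cases "k \<le> -1")
    case True
    then show ?thesis unfolding G
      using tulap_piece_succ_neg[OF \<open>0 < b\<close> True] tulap_piece_le[OF assms True t]
        min_pure_dp_bound_cases(1)[OF assms]
      by simp
  next
    case False
    then have "0 \<le> k" by simp
    then have "tulap_piece b (k + 1) (t + 1) = 1 - b * (1 - tulap_piece b k t)"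
      using tulap_piece_succ_nonneg[OF \<open>0 < b\<close>, of k t] by linarith
    then show ?thesis unfolding G
      using tulap_piece_ge[OF assms \<open>0 \<le> k\<close> t] min_pure_dp_bound_cases(2)[OF assms] by simp
  qed
qed

lemma tulap0_cdf_mono_local:
  assumes "0 < b" "b < 1" "s \<le> t" "t \<le> s + 1"
  shows "tulap0_cdf 0 b s \<le> tulap0_cdf 0 b t"
proof -
  define k where "k = \<lfloor>s + 1/2\<rfloor>"
  have s: "\<bar>s - of_int k\<bar> \<le> 1/2" unfolding k_def by (rule floor_half_dist)
  show ?thesis
  proof (cases "t \<le> of_int k + 1/2")
    case True
    then have "\<bar>t - of_int k\<bar> \<le> 1/2" using s assms unfolding abs_le_iff by linarith
    then show ?thesis
      using tulap0_cdf_eq_piece[OF \<open>0 < b\<close>] s tulap_piece_mono[OF \<open>0 < b\<close> \<open>b < 1\<close> \<open>s \<le> t\<close>] by simp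
  next
    case False
    then have t: "\<bar>t - of_int (k + 1)\<bar> \<le> 1/2" using s assms unfolding abs_le_iff by auto
    have "tulap0_cdf 0 b s = tulap_piece b k s"
      using tulap0_cdf_eq_piece[OF \<open>0 < b\<close> s] .
    also have "\<dots> \<le> tulap_piece b k (of_int k + 1/2)"
      using s unfolding abs_le_iff by (intro tulap_piece_mono[OF \<open>0 < b\<close> \<open>b < 1\<close>]) linarith
    also have "\<dots> = tulap_piece b (k + 1) (of_int k + 1/2)"
      using tulap_piece_continuous[OF \<open>0 < b\<close>] by simp
    also have "\<dots> \<le> tulap_piece b (k + 1) t"
      using False by (intro tulap_piece_mono[OF \<open>0 < b\<close> \<open>b < 1\<close>]) simp
    also have "\<dots> = tulap0_cdf 0 b t"
      using tulap0_cdf_eq_piece[OF \<open>0 < b\<close> t] by simp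
    finally show ?thesis .
  qed
qed

lemma mono_tulap0_cdf:
  assumes "0 < b" "b < 1"
  shows "mono (tulap0_cdf 0 b)"
proof -
  have "tulap0_cdf 0 b s \<le> tulap0_cdf 0 b t" if "s \<le> t" "t \<le> s + real m" for m s t
    using that
  proof (induction m arbitrary: s)
    case 0
    then show ?case by simp
  next
    case (Suc m)
    show ?case
    proof (cases "t \<le> s + 1")
      case True
      then show ?thesis using tulap0_cdf_mono_local[OF assms \<open>s \<le> t\<close>] by simp
    next
      case False
      then have "tulap0_cdf 0 b s \<le> tulap0_cdf 0 b (s + 1)"
        using tulap0_cdf_mono_local[OF assms] by simp
      also have "\<dots> \<le> tulap0_cdf 0 b t"
        using Suc False by (intro Suc.IH) auto
      finally show ?thesis .
    qed
  qed
  then show ?thesis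
    by (intro monoI) (metis real_nat_ceiling_ge add.commute diff_le_eq)
qed

lemma tulap0_cdf_uminus:
  assumes "0 < b"
  shows "tulap0_cdf 0 b (- t) = 1 - tulap0_cdf 0 b t"
proof -
  have t: "\<bar>t - of_int (nint t)\<bar> \<le> 1/2" by (rule nint_dist)
  then have "\<bar>- t - of_int (- nint t)\<bar> \<le> 1/2" by (simp add: abs_minus_commute)
  then show ?thesis
    using tulap0_cdf_eq_piece[OF assms] t tulap_piece_uminus[OF assms] by metis
qed

definition clip01 :: "real \<Rightarrow> real" where
  "clip01 y = max 0 (min 1 y)"

lemma mono_clip01: "mono clip01"
  by (intro monoI) (auto simp: clip01_def)

lemma clip01_uminus: "clip01 (1 - y) = 1 - clip01 y"
  by (auto simp: clip01_def)

lemma clip01_comp_le: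
  assumes "mono f" "0 \<le> f 0" "1 \<le> f 1"
  shows "clip01 (f y) \<le> f (clip01 y)"
  using monoD[OF assms(1), of y 0] monoD[OF assms(1), of 0 y] monoD[OF assms(1), of 1 y] assms(2,3)
  by (cases "y \<le> 0"; cases "1 \<le> y") (auto simp: clip01_def)

lemma min_one_comp_clip01_le:
  assumes "mono f" "0 \<le> f 0" "1 \<le> f 1" "0 < clip01 y"
  shows "min 1 (f (clip01 y)) \<le> clip01 (f y)"
  using monoD[OF assms(1), of 0 y] monoD[OF assms(1), of 1 y] assms(2-4)
  by (cases "1 \<le> y") (auto simp: clip01_def)

lemma tulap_cdf_eq_clip01:
  assumes "q < 1"
  shows "tulap_cdf 0 b q x = clip01 ((tulap0_cdf 0 b x - q/2) / (1 - q))"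
proof -
  define g where "g = tulap0_cdf 0 b x"
  have "g < q/2 \<longleftrightarrow> (g - q/2) / (1 - q) < 0" "1 - q/2 < g \<longleftrightarrow> 1 < (g - q/2) / (1 - q)"
    using assms by (simp_all add: divide_less_0_iff less_divide_eq) linarith
  then show ?thesis
    unfolding tulap_cdf_def Let_def g_def[symmetric] clip01_def by auto
qed

section \<open>Tulap tests\<close>

locale tulap_dp =
  fixes \<epsilon> \<delta> b q :: real
  assumes eps_pos: "0 < \<epsilon>" and delta_nonneg: "0 \<le> \<delta>"
    and b_eq: "b = exp (- \<epsilon>)" and q_eq: "q = 2 * \<delta> * b / (1 - b + 2 * \<delta> * b)"
begin

lemma b_pos: "0 < b" and b_less_1: "b < 1"
  using eps_pos by (simp_all add: b_eq)

lemma q_less_1: "q < 1"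
proof -
  have "0 \<le> 2 * \<delta> * b" using delta_nonneg b_pos by simp
  then show ?thesis unfolding q_eq using b_less_1 by (simp add: divide_less_eq)
qed

lemma dp_next_bound_pure: "dp_next_bound \<epsilon> 0 g = min (g / b) (1 - b * (1 - g))"
  by (simp add: dp_next_bound_def b_eq exp_minus inverse_eq_divide mult.commute)

lemma dp_next_bound_bounds: "0 \<le> dp_next_bound \<epsilon> \<delta> 0" "1 \<le> dp_next_bound \<epsilon> \<delta> 1"
  using eps_pos delta_nonneg by (simp_all add: dp_next_bound_zero_nonneg dp_next_bound_one_ge)

lemma dp_next_bound_renormalise:
  "(dp_next_bound \<epsilon> 0 g - q/2) / (1 - q) = dp_next_bound \<epsilon> \<delta> ((g - q/2) / (1 - q))"
proof -
  define D where "D = 1 - b + 2 * \<delta> * b"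
  have "0 < D" unfolding D_def using b_less_1 b_pos delta_nonneg by (smt (verit) mult_nonneg_nonneg)
  have q1: "1 - q = (1 - b) / D" and q2: "q / 2 = \<delta> * b / D"
    unfolding q_eq D_def[symmetric] using \<open>0 < D\<close> by (simp_all add: field_simps D_def)
  have T: "(h - q/2) / (1 - q) = (h * D - \<delta> * b) / (1 - b)" for h
  proof -
    have "(h - q/2) / (1 - q) = (h - \<delta> * b / D) / ((1 - b) / D)" by (simp only: q1 q2)
    also have "\<dots> = (h * D - \<delta> * b) / (1 - b)" using \<open>0 < D\<close> b_less_1 by (simp add: field_simps)
    finally show ?thesis .
  qed
  have e: "exp \<epsilon> = 1 / b" "exp (- \<epsilon>) = b" using b_eq by (simp_all add: exp_minus inverse_eq_divide)
  have min: "(min u v - q/2) / (1 - q) = min ((u - q/2) / (1 - q)) ((v - q/2) / (1 - q))" for u v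
    using q_less_1 by (intro min_of_mono[symmetric] monoI) (simp add: divide_right_mono)
  have e1: "(g / b - q/2) / (1 - q) = exp \<epsilon> * ((g - q/2) / (1 - q)) + \<delta>"
    unfolding T e using b_pos b_less_1 by (simp add: field_simps D_def)
  have e2: "(1 - b * (1 - g) - q/2) / (1 - q) = 1 - exp (- \<epsilon>) * (1 - (g - q/2) / (1 - q) - \<delta>)"
    unfolding T e using b_pos b_less_1 by (simp add: field_simps D_def)
  show ?thesis
    unfolding dp_next_bound_pure min e1 e2 by (simp only: dp_next_bound_def)
qed

lemma tulap_cdf_succ:
  "tulap_cdf 0 b q (t + 1) = clip01 (dp_next_bound \<epsilon> \<delta> ((tulap0_cdf 0 b t - q/2) / (1 - q)))"
  unfolding tulap_cdf_eq_clip01[OF q_less_1] tulap0_cdf_succ[OF b_pos b_less_1]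
  by (simp add: dp_next_bound_renormalise[symmetric] dp_next_bound_pure)

lemma tulap_cdf_succ_le: "tulap_cdf 0 b q (t + 1) \<le> dp_next_bound \<epsilon> \<delta> (tulap_cdf 0 b q t)"
  unfolding tulap_cdf_succ tulap_cdf_eq_clip01[OF q_less_1, of _ t]
  by (rule clip01_comp_le[OF mono_dp_next_bound dp_next_bound_bounds])

lemma tulap_cdf_succ_ge:
  "0 < tulap_cdf 0 b q t \<Longrightarrow> min 1 (dp_next_bound \<epsilon> \<delta> (tulap_cdf 0 b q t)) \<le> tulap_cdf 0 b q (t + 1)"
  unfolding tulap_cdf_succ tulap_cdf_eq_clip01[OF q_less_1, of _ t]
  by (rule min_one_comp_clip01_le[OF mono_dp_next_bound dp_next_bound_bounds])

lemma mono_tulap_cdf: "mono (tulap_cdf 0 b q)"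
proof (rule monoI)
  fix s t :: real assume "s \<le> t"
  then have "tulap0_cdf 0 b s \<le> tulap0_cdf 0 b t"
    using mono_tulap0_cdf[OF b_pos b_less_1] by (simp add: monoD)
  then show "tulap_cdf 0 b q s \<le> tulap_cdf 0 b q t"
    unfolding tulap_cdf_eq_clip01[OF q_less_1] using q_less_1
    by (intro monoD[OF mono_clip01] divide_right_mono) auto
qed

lemma tulap_cdf_bounds: "0 \<le> tulap_cdf 0 b q t" "tulap_cdf 0 b q t \<le> 1"
  unfolding tulap_cdf_eq_clip01[OF q_less_1] by (simp_all add: clip01_def)

lemma tulap_cdf_uminus: "tulap_cdf 0 b q (- t) = 1 - tulap_cdf 0 b q t"
proof -
  have "(1 - g - q/2) / (1 - q) = 1 - (g - q/2) / (1 - q)" for g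
    using q_less_1 by (simp add: field_simps)
  then show ?thesis
    unfolding tulap_cdf_eq_clip01[OF q_less_1] tulap0_cdf_uminus[OF b_pos] by (simp add: clip01_uminus)
qed

lemma tulap_test_UMP:
  fixes m :: real and n :: nat
  assumes "0 < \<theta>0" "\<theta>0 < 1"
  defines "\<phi> \<equiv> \<lambda>x::nat. tulap_cdf 0 b q (real x - m)"
  shows "UMP n (dp_tests n \<epsilon> \<delta>) {0..\<theta>0} {\<theta>0<..1} (binom_exp n \<theta>0 \<phi>) \<phi>"
proof (rule dp_extremal_UMP[OF assms(1,2)])
  have succ: "real (x + 1) - m = (real x - m) + 1" for x by simp
  show mono: "mono_on {..n} \<phi>"
    unfolding \<phi>_def by (intro mono_onI monoD[OF mono_tulap_cdf]) simp
  show "\<phi> \<in> dp_tests n \<epsilon> \<delta>"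
  proof (rule mono_in_dp_testsI[OF less_imp_le[OF eps_pos] delta_nonneg mono])
    show "0 \<le> \<phi> x \<and> \<phi> x \<le> 1" for x
      using tulap_cdf_bounds by (simp add: \<phi>_def)
    show "\<phi> (x + 1) \<le> dp_next_bound \<epsilon> \<delta> (\<phi> x)" for x
      unfolding \<phi>_def succ by (rule tulap_cdf_succ_le)
  qed
  show "dp_extremal n \<epsilon> \<delta> \<phi>"
    unfolding dp_extremal_def \<phi>_def succ using tulap_cdf_succ_ge by blast
qed simp

end

lemma UMP_reflect:
  assumes UMP: "UMP n (dp_tests n \<epsilon> \<delta>) {0..1 - \<theta>0} {1 - \<theta>0<..1} \<alpha> \<phi>"
    and \<psi>: "\<And>x. x \<le> n \<Longrightarrow> \<psi> x = \<phi> (n - x)"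
  shows "UMP n (dp_tests n \<epsilon> \<delta>) {\<theta>0..1} {0..<\<theta>0} \<alpha> \<psi>"
  unfolding UMP_def
proof (intro conjI ballI impI)
  have \<psi>_exp: "binom_exp n t \<psi> = binom_exp n (1 - t) \<phi>" for t
    using \<psi> by (rule binom_exp_reflect)
  show "\<psi> \<in> dp_tests n \<epsilon> \<delta>"
    using UMP \<psi> by (auto simp: UMP_def intro: dp_tests_reflect)
  show "binom_exp n \<theta> \<psi> \<le> \<alpha>" if "\<theta> \<in> {\<theta>0..1}" for \<theta>
    using UMP that by (auto simp: UMP_def \<psi>_exp)
  fix \<chi> \<theta> assume \<chi>: "\<chi> \<in> dp_tests n \<epsilon> \<delta>"
    and size: "\<forall>\<theta>\<in>{\<theta>0..1}. binom_exp n \<theta> \<chi> \<le> \<alpha>"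
    and "\<theta> \<in> {0..<\<theta>0}"
  define \<chi>' where "\<chi>' y = \<chi> (n - y)" for y
  have \<chi>_exp: "binom_exp n t \<chi> = binom_exp n (1 - t) \<chi>'" for t
    by (rule binom_exp_reflect) (simp add: \<chi>'_def)
  have "\<chi>' \<in> dp_tests n \<epsilon> \<delta>"
    using \<chi> by (rule dp_tests_reflect) (simp add: \<chi>'_def)
  moreover have "\<forall>t\<in>{0..1 - \<theta>0}. binom_exp n t \<chi>' \<le> \<alpha>"
  proof
    fix t assume "t \<in> {0..1 - \<theta>0}"
    then show "binom_exp n t \<chi>' \<le> \<alpha>" using size[rule_format, of "1 - t"] \<chi>_exp[of "1 - t"] by auto
  qed
  ultimately have "binom_exp n (1 - \<theta>) \<chi>' \<le> binom_exp n (1 - \<theta>) \<phi>"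
    using UMP \<open>\<theta> \<in> {0..<\<theta>0}\<close> by (auto simp: UMP_def)
  then show "binom_exp n \<theta> \<chi> \<le> binom_exp n \<theta> \<psi>"
    by (simp add: \<chi>_exp \<psi>_exp)
qed

theorem corollary1:
  fixes \<epsilon> \<delta> \<alpha> \<theta>0 m1 m2 :: real and n :: nat
  assumes "\<epsilon> > 0" and "\<delta> \<ge> 0" and "0 < \<alpha>" and "\<alpha> < 1" and "n \<ge> 1"
    and "0 < \<theta>0" and "\<theta>0 < 1"
    and "b = exp (- \<epsilon>)"
    and "q = 2 * \<delta> * b / (1 - b + 2 * \<delta> * b)"
    and "\<phi>s = (\<lambda>x::nat. tulap_cdf 0 b q (real x - m1))"
    and "\<psi>s = (\<lambda>x::nat. 1 - tulap_cdf 0 b q (real x - m2))"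
    and "binom_exp n \<theta>0 \<phi>s = \<alpha>"
    and "binom_exp n \<theta>0 \<psi>s = \<alpha>"
  shows "UMP n (dp_tests n \<epsilon> \<delta>) {0..\<theta>0} {\<theta>0<..1} \<alpha> \<phi>s
       \<and> UMP n (dp_tests n \<epsilon> \<delta>) {\<theta>0..1} {0..<\<theta>0} \<alpha> \<psi>s"
proof
  interpret tulap_dp \<epsilon> \<delta> b q
    using assms(1,2,8,9) by unfold_locales
  show "UMP n (dp_tests n \<epsilon> \<delta>) {0..\<theta>0} {\<theta>0<..1} \<alpha> \<phi>s"
    using tulap_test_UMP[OF assms(6,7), where m = m1 and n = n] assms(10,12) by simp
  define \<phi> where "\<phi> = (\<lambda>x::nat. tulap_cdf 0 b q (real x - (real n - m2)))"
  have \<psi>s: "\<psi>s x = \<phi> (n - x)" if "x \<le> n" for x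
    using that tulap_cdf_uminus[of "real x - m2"] by (simp add: assms(11) \<phi>_def of_nat_diff)
  have \<theta>0': "0 < 1 - \<theta>0" "1 - \<theta>0 < 1" using assms(6,7) by simp_all
  have "binom_exp n (1 - \<theta>0) \<phi> = \<alpha>"
    using binom_exp_reflect[of n \<psi>s \<phi> \<theta>0] \<psi>s assms(13) by simp
  with tulap_test_UMP[OF \<theta>0', where m = "real n - m2" and n = n]
  have "UMP n (dp_tests n \<epsilon> \<delta>) {0..1 - \<theta>0} {1 - \<theta>0<..1} \<alpha> \<phi>"
    unfolding \<phi>_def by simp
  then show "UMP n (dp_tests n \<epsilon> \<delta>) {\<theta>0..1} {0..<\<theta>0} \<alpha> \<psi>s"
    using \<psi>s by (rule UMP_reflect)
qed

end
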